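(* Let $H$ be a trigraph of maximum red degree at most $4$ containing a fence gadget $F$ attached to a single vertex $s$, where $s$ has red degree at most $3$, and assume $F$ satisfies the attachment rule in $H$. Then there is a partial $4$-sequence from $H$ to the trigraph $H'$ obtained from $H$ by contracting $V(F)$ into a single vertex.
   Context: A trigraph $G$ consists of a vertex set $V(G)$ and two disjoint sets of unordered pairs of distinct vertices: black edges and red edges; the red graph is formed by the red edges, and the red degree of a vertex is its degree in the red graph. Contracting two distinct vertices $u,v$ replaces them by a new vertex $w$ such that, for every other vertex $z$, $wz$ is black if $uz,vz$ are both black, a non-edge if both are non-edges, and red otherwise. A partial $d$-sequence from $G$ is a sequence of trigraphs starting at $G$, each obtained from the previous by one contraction, all of maximum red degree at most $d$. A fence gadget is a trigraph $F$ on $A\cup B$, $A=\{a_1,\dots,a_6\}$, $B=\{b_1,\dots,b_6\}$, whose black edges are those of the cycles $a_1a_2a_3a_4a_5a_6a_1$ and $b_1b_2b_3b_4b_5b_6b_1$ together with $b_1a_6$, and whose red edges are $a_ib_i$ for $i\in[6]$ and $a_ib_{i+1}$ for $i\in[5]$. Inside a trigraph $G$, $F$ is attached to a nonempty set $S\subseteq V(G)\setminus V(F)$ if every vertex of $A$ is joined by a black edge to every vertex of $S$ and no vertex of $B$ is adjacent to a vertex of $S$. $F$ satisfies the attachment rule in $G$ if $V(F)$ is the vertex set of a connected component of the red graph of $G$ and there is a set $X\subseteq V(G)\setminus(V(F)\cup S)$ such that every vertex of $A$ has exactly $X\cup S$ as its set of neighbours outside $V(F)$, every vertex of $B$ has exactly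 $X$ as its set of neighbours outside $V(F)$ (all these edges black), and every vertex of $X$ is adjacent to every vertex of $S$. *)

theory Defs
  imports Main
begin

type_synonym 'v trigraph = "'v set \<times> 'v set set \<times> 'v set set"

definition verts :: "'v trigraph \<Rightarrow> 'v set" where "verts G = fst G"
definition black :: "'v trigraph \<Rightarrow> 'v set set" where "black G = fst (snd G)"
definition red :: "'v trigraph \<Rightarrow> 'v set set" where "red G = snd (snd G)"

definition pairs_on :: "'v set \<Rightarrow> 'v set set" where
  "pairs_on V = {{x, y} | x y. x \<in> V \<and> y \<in> V \<and> x \<noteq> y}"

definition trigraph :: "'v trigraph \<Rightarrow> bool" where
  "trigraph G \<longleftrightarrow> finite (verts G) \<and> black G \<subseteq> pairs_on (verts G)
     \<and> red G \<subseteq> pairs_on (verts G) \<and> black G \<inter> red G = {}"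

definition red_degree :: "'v trigraph \<Rightarrow> 'v \<Rightarrow> nat" where
  "red_degree G x = card {y \<in> verts G. {x, y} \<in> red G}"

definition max_red_deg_le :: "'v trigraph \<Rightarrow> nat \<Rightarrow> bool" where
  "max_red_deg_le G d \<longleftrightarrow> (\<forall>x \<in> verts G. red_degree G x \<le> d)"

text \<open>Contract a set S of vertices into one new vertex named w
  (w must not clash with the remaining vertices).\<close>
definition contract_set :: "'v trigraph \<Rightarrow> 'v set \<Rightarrow> 'v \<Rightarrow> 'v trigraph" where
  "contract_set G S w =
    ((verts G - S) \<union> {w},
     {e \<in> black G. e \<subseteq> verts G - S}
       \<union> {{w, z} | z. z \<in> verts G - S \<and> (\<forall>x \<in> S. {x, z} \<in> black G)},
     {e \<in> red G. e \<subseteq> verts G - S}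
       \<union> {{w, z} | z. z \<in> verts G - S \<and> \<not> (\<forall>x \<in> S. {x, z} \<in> black G)
              \<and> \<not> (\<forall>x \<in> S. {x, z} \<notin> black G \<and> {x, z} \<notin> red G)})"

definition contraction_step :: "'v trigraph \<Rightarrow> 'v trigraph \<Rightarrow> bool" where
  "contraction_step G G' \<longleftrightarrow> (\<exists>u v w. u \<in> verts G \<and> v \<in> verts G \<and> u \<noteq> v
      \<and> w \<notin> verts G - {u, v} \<and> G' = contract_set G {u, v} w)"

definition partial_seq :: "nat \<Rightarrow> 'v trigraph list \<Rightarrow> bool" where
  "partial_seq d Gs \<longleftrightarrow> Gs \<noteq> []
     \<and> (\<forall>i. Suc i < length Gs \<longrightarrow> contraction_step (Gs ! i) (Gs ! Suc i))
     \<and> (\<forall>G \<in> set Gs. max_red_deg_le G d)"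

definition trigraph_iso :: "'v trigraph \<Rightarrow> 'v trigraph \<Rightarrow> bool" where
  "trigraph_iso G1 G2 \<longleftrightarrow> (\<exists>f. bij_betw f (verts G1) (verts G2)
     \<and> (\<forall>x \<in> verts G1. \<forall>y \<in> verts G1.
          ({f x, f y} \<in> black G2 \<longleftrightarrow> {x, y} \<in> black G1)
        \<and> ({f x, f y} \<in> red G2 \<longleftrightarrow> {x, y} \<in> red G1)))"

definition fence_black :: "(nat \<Rightarrow> 'v) \<Rightarrow> (nat \<Rightarrow> 'v) \<Rightarrow> 'v set set" where
  "fence_black a b = {{a i, a (Suc i)} | i. 1 \<le> i \<and> i \<le> 5} \<union> {{a 6, a 1}}
     \<union> {{b i, b (Suc i)} | i. 1 \<le> i \<and> i \<le> 5} \<union> {{b 6, b 1}} \<union> {{b 1, a 6}}"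

definition fence_red :: "(nat \<Rightarrow> 'v) \<Rightarrow> (nat \<Rightarrow> 'v) \<Rightarrow> 'v set set" where
  "fence_red a b = {{a i, b i} | i. 1 \<le> i \<and> i \<le> 6}
     \<union> {{a i, b (Suc i)} | i. 1 \<le> i \<and> i \<le> 5}"

definition fence_verts :: "(nat \<Rightarrow> 'v) \<Rightarrow> (nat \<Rightarrow> 'v) \<Rightarrow> 'v set" where
  "fence_verts a b = a ` {1..6} \<union> b ` {1..6}"

definition contains_fence :: "'v trigraph \<Rightarrow> (nat \<Rightarrow> 'v) \<Rightarrow> (nat \<Rightarrow> 'v) \<Rightarrow> bool" where
  "contains_fence G a b \<longleftrightarrow>
     inj_on a {1..6} \<and> inj_on b {1..6} \<and> a ` {1..6} \<inter> b ` {1..6} = {}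
     \<and> fence_verts a b \<subseteq> verts G
     \<and> (\<forall>x \<in> fence_verts a b. \<forall>y \<in> fence_verts a b. x \<noteq> y \<longrightarrow>
          ({x, y} \<in> black G \<longleftrightarrow> {x, y} \<in> fence_black a b)
        \<and> ({x, y} \<in> red G \<longleftrightarrow> {x, y} \<in> fence_red a b))"

definition adjacent :: "'v trigraph \<Rightarrow> 'v \<Rightarrow> 'v \<Rightarrow> bool" where
  "adjacent G x y \<longleftrightarrow> {x, y} \<in> black G \<or> {x, y} \<in> red G"

definition attached :: "'v trigraph \<Rightarrow> (nat \<Rightarrow> 'v) \<Rightarrow> (nat \<Rightarrow> 'v) \<Rightarrow> 'v set \<Rightarrow> bool" where
  "attached G a b S \<longleftrightarrow> S \<noteq> {} \<and> S \<subseteq> verts G - fence_verts a b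
     \<and> (\<forall>i \<in> {1..6}. \<forall>s \<in> S. {a i, s} \<in> black G)
     \<and> (\<forall>i \<in> {1..6}. \<forall>s \<in> S. \<not> adjacent G (b i) s)"

definition red_rel :: "'v trigraph \<Rightarrow> ('v \<times> 'v) set" where
  "red_rel G = {(x, y). {x, y} \<in> red G}"

definition red_component :: "'v trigraph \<Rightarrow> 'v \<Rightarrow> 'v set" where
  "red_component G x = {y. (x, y) \<in> (red_rel G)\<^sup>*}"

definition attachment_rule :: "'v trigraph \<Rightarrow> (nat \<Rightarrow> 'v) \<Rightarrow> (nat \<Rightarrow> 'v) \<Rightarrow> 'v set \<Rightarrow> bool" where
  "attachment_rule G a b S \<longleftrightarrow>
     (\<exists>x \<in> fence_verts a b. fence_verts a b = red_component G x)
     \<and> (\<exists>X. X \<subseteq> verts G - (fence_verts a b \<union> S)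
        \<and> (\<forall>i \<in> {1..6}. \<forall>z \<in> verts G - fence_verts a b.
              (adjacent G (a i) z \<longleftrightarrow> z \<in> X \<union> S) \<and> {a i, z} \<notin> red G)
        \<and> (\<forall>i \<in> {1..6}. \<forall>z \<in> verts G - fence_verts a b.
              (adjacent G (b i) z \<longleftrightarrow> z \<in> X) \<and> {b i, z} \<notin> red G)
        \<and> (\<forall>x \<in> X. \<forall>s \<in> S. adjacent G x s))"

end

theory Submission
  imports Defs
begin

text \<open>Each trigraph of the sequence is a quotient of H in which the fence has been split into
  bags, each bag contracted to one vertex. By the attachment rule every vertex outside the fence
  other than s sees all of the fence in the same way, so it never acquires red edges; red edges
  only join two bags, or join s to a bag meeting both A and B. The red degrees of a quotient are
  thus determined by the partition of the twelve fence vertices alone, and an explicit sequence of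
  eleven merges, checked by evaluation, keeps them at most 4, with s (red degree at most 3 in H)
  red to at most one such mixed bag at any time.\<close>

section \<open>Trigraph basics\<close>

lemma trigraph_eqI:
  assumes "verts G = verts G'" and "black G = black G'" and "red G = red G'"
  shows "G = G'"
  using assms unfolding verts_def black_def red_def by (simp add: prod_eq_iff)

lemma doubleton_set_eqI:
  assumes "\<forall>e\<in>A. \<exists>u z. e = {u, z}" and "\<forall>e\<in>B. \<exists>u z. e = {u, z}"
    and "\<And>u z. {u, z} \<in> A \<longleftrightarrow> {u, z} \<in> B"
  shows "A = B"
proof (rule set_eqI)
  fix e
  show "e \<in> A \<longleftrightarrow> e \<in> B"
    using assms(1,2) assms(3)[symmetric] by (cases "e \<in> A") metis+
qed

lemma doubleton_set_eq_pivotI: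
  assumes "\<forall>e\<in>A. \<exists>u z. e = {u, z}" and "\<forall>e\<in>B. \<exists>u z. e = {u, z}"
    and "\<And>y. {w, y} \<in> A \<longleftrightarrow> {w, y} \<in> B"
    and "\<And>p q. p \<noteq> w \<Longrightarrow> q \<noteq> w \<Longrightarrow> {p, q} \<in> A \<longleftrightarrow> {p, q} \<in> B"
  shows "A = B"
proof (rule doubleton_set_eqI[OF assms(1,2)])
  fix p q
  consider "p = w" | "q = w" | "p \<noteq> w" "q \<noteq> w" by blast
  then show "{p, q} \<in> A \<longleftrightarrow> {p, q} \<in> B"
    by cases (use assms(3,4) in \<open>auto simp: insert_commute\<close>)
qed

lemma trigraph_edges_doubletons:
  assumes "trigraph H"
  shows "\<forall>e\<in>black H. \<exists>u z. e = {u, z}" and "\<forall>e\<in>red H. \<exists>u z. e = {u, z}"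
  using assms unfolding trigraph_def pairs_on_def by blast+

lemma trigraph_edge_distinct:
  assumes "trigraph H" and "adjacent H u z"
  shows "u \<in> verts H" "z \<in> verts H" "u \<noteq> z"
  using assms unfolding trigraph_def pairs_on_def adjacent_def by (auto simp: doubleton_eq_iff)

lemma trigraph_red_iff:
  assumes "trigraph H"
  shows "{u, z} \<in> red H \<longleftrightarrow> {u, z} \<notin> black H \<and> adjacent H u z"
  using assms unfolding trigraph_def adjacent_def by blast

lemma verts_contract_set [simp]: "verts (contract_set G S w) = verts G - S \<union> {w}"
  by (simp add: contract_set_def verts_def)

lemma black_contract_set_iff:
  "{u, z} \<in> black (contract_set G S w) \<longleftrightarrow>
     {u, z} \<in> black G \<and> u \<in> verts G - S \<and> z \<in> verts G - S
     \<or> u = w \<and> z \<in> verts G - S \<and> (\<forall>x\<in>S. {x, z} \<in> black G)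
     \<or> z = w \<and> u \<in> verts G - S \<and> (\<forall>x\<in>S. {x, u} \<in> black G)"
  unfolding contract_set_def black_def verts_def by (auto simp: doubleton_eq_iff)

lemma red_contract_set_iff:
  "{u, z} \<in> red (contract_set G S w) \<longleftrightarrow>
     {u, z} \<in> red G \<and> u \<in> verts G - S \<and> z \<in> verts G - S
     \<or> u = w \<and> z \<in> verts G - S \<and> \<not> (\<forall>x\<in>S. {x, z} \<in> black G) \<and> (\<exists>x\<in>S. adjacent G x z)
     \<or> z = w \<and> u \<in> verts G - S \<and> \<not> (\<forall>x\<in>S. {x, u} \<in> black G) \<and> (\<exists>x\<in>S. adjacent G x u)"
  unfolding contract_set_def red_def verts_def adjacent_def by (auto simp: doubleton_eq_iff)

lemma edges_contract_set_doubletons: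
  assumes "\<forall>e\<in>black G. \<exists>u z. e = {u, z}" "\<forall>e\<in>red G. \<exists>u z. e = {u, z}"
  shows "\<forall>e\<in>black (contract_set G S w). \<exists>u z. e = {u, z}"
    "\<forall>e\<in>red (contract_set G S w). \<exists>u z. e = {u, z}"
  using assms unfolding contract_set_def black_def red_def by auto

lemma partial_seq_singleton: "partial_seq d [G] \<longleftrightarrow> max_red_deg_le G d"
  by (simp add: partial_seq_def)

lemma partial_seq_Cons:
  assumes "Gs \<noteq> []"
  shows "partial_seq d (G # Gs) \<longleftrightarrow>
    max_red_deg_le G d \<and> contraction_step G (hd Gs) \<and> partial_seq d Gs"
proof -
  have "(\<forall>i. Suc i < length (G # Gs) \<longrightarrow> contraction_step ((G # Gs) ! i) ((G # Gs) ! Suc i))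
      \<longleftrightarrow> contraction_step G (hd Gs)
          \<and> (\<forall>i. Suc i < length Gs \<longrightarrow> contraction_step (Gs ! i) (Gs ! Suc i))"
    using assms by (auto simp: hd_conv_nth nth_Cons' split: if_splits) (metis Suc_pred less_Suc_eq_0_disj)+
  then show ?thesis using assms unfolding partial_seq_def by auto
qed

lemma trigraph_iso_refl: "trigraph_iso G G"
  unfolding trigraph_iso_def by (rule exI[of _ id]) simp

section \<open>Quotient trigraphs\<close>

definition all_black :: "'v trigraph \<Rightarrow> 'v set \<Rightarrow> 'v set \<Rightarrow> bool" where
  "all_black H A B \<longleftrightarrow> (\<forall>x\<in>A. \<forall>y\<in>B. {x, y} \<in> black H)"

definition all_nonadjacent :: "'v trigraph \<Rightarrow> 'v set \<Rightarrow> 'v set \<Rightarrow> bool" where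
  "all_nonadjacent H A B \<longleftrightarrow> (\<forall>x\<in>A. \<forall>y\<in>B. \<not> adjacent H x y)"

lemma all_black_commute: "all_black H A B \<longleftrightarrow> all_black H B A"
  unfolding all_black_def by (metis insert_commute)

lemma all_nonadjacent_commute: "all_nonadjacent H A B \<longleftrightarrow> all_nonadjacent H B A"
  unfolding all_nonadjacent_def adjacent_def by (metis insert_commute)

lemma all_black_imp_not_all_nonadjacent:
  "A \<noteq> {} \<Longrightarrow> B \<noteq> {} \<Longrightarrow> all_black H A B \<Longrightarrow> \<not> all_nonadjacent H A B"
  unfolding all_black_def all_nonadjacent_def adjacent_def by blast

text \<open>Vertex u of the quotient stands for the bag K u of vertices of H.\<close>

definition quotient_trigraph :: "'v trigraph \<Rightarrow> 'v set \<Rightarrow> ('v \<Rightarrow> 'v set) \<Rightarrow> 'v trigraph" where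
  "quotient_trigraph H V K =
    (V,
     {{u, z} | u z. u \<in> V \<and> z \<in> V \<and> u \<noteq> z \<and> all_black H (K u) (K z)},
     {{u, z} | u z. u \<in> V \<and> z \<in> V \<and> u \<noteq> z
        \<and> \<not> all_black H (K u) (K z) \<and> \<not> all_nonadjacent H (K u) (K z)})"

lemma verts_quotient_trigraph [simp]: "verts (quotient_trigraph H V K) = V"
  by (simp add: quotient_trigraph_def verts_def)

lemma black_quotient_trigraph_iff:
  "{u, z} \<in> black (quotient_trigraph H V K) \<longleftrightarrow>
     u \<in> V \<and> z \<in> V \<and> u \<noteq> z \<and> all_black H (K u) (K z)"
  unfolding quotient_trigraph_def black_def
  by (auto simp: doubleton_eq_iff all_black_commute)

lemma red_quotient_trigraph_iff:
  "{u, z} \<in> red (quotient_trigraph H V K) \<longleftrightarrow>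
     u \<in> V \<and> z \<in> V \<and> u \<noteq> z \<and> \<not> all_black H (K u) (K z) \<and> \<not> all_nonadjacent H (K u) (K z)"
  unfolding quotient_trigraph_def red_def
  by (auto simp: doubleton_eq_iff all_black_commute all_nonadjacent_commute)

lemma edges_quotient_trigraph_doubletons:
  "\<forall>e\<in>black (quotient_trigraph H V K). \<exists>u z. e = {u, z}"
  "\<forall>e\<in>red (quotient_trigraph H V K). \<exists>u z. e = {u, z}"
  unfolding quotient_trigraph_def black_def red_def by auto

lemma quotient_trigraph_singletons:
  assumes "trigraph H" and "\<forall>x\<in>verts H. K x = {x}"
  shows "quotient_trigraph H (verts H) K = H"
proof (rule trigraph_eqI)
  let ?Q = "quotient_trigraph H (verts H) K"
  have edge: "u \<in> verts H \<and> z \<in> verts H \<and> u \<noteq> z" if "adjacent H u z" for u z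
    using trigraph_edge_distinct[OF assms(1) that] by blast
  show "black ?Q = black H"
  proof (rule doubleton_set_eqI)
    fix u z
    show "{u, z} \<in> black ?Q \<longleftrightarrow> {u, z} \<in> black H"
      unfolding black_quotient_trigraph_iff using assms(2) edge[of u z]
      by (auto simp: all_black_def adjacent_def)
  qed (simp_all add: edges_quotient_trigraph_doubletons trigraph_edges_doubletons[OF assms(1)])
  show "red ?Q = red H"
  proof (rule doubleton_set_eqI)
    fix u z
    show "{u, z} \<in> red ?Q \<longleftrightarrow> {u, z} \<in> red H"
      unfolding red_quotient_trigraph_iff trigraph_red_iff[OF assms(1)] using assms(2) edge[of u z]
      by (auto simp: all_black_def all_nonadjacent_def)
  qed (simp_all add: edges_quotient_trigraph_doubletons trigraph_edges_doubletons[OF assms(1)])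
qed simp

lemma contract_quotient_trigraph:
  assumes "u \<in> V" "v \<in> V" "u \<noteq> v" and nonempty: "\<forall>x\<in>V. K x \<noteq> {}"
  shows "contract_set (quotient_trigraph H V K) {u, v} u
           = quotient_trigraph H (V - {v}) (K(u := K u \<union> K v))"
    (is "contract_set ?Q _ _ = ?Q'")
proof (rule trigraph_eqI)
  let ?C = "contract_set ?Q {u, v} u"
  have nonadjacent: "\<not> adjacent ?Q x z \<longleftrightarrow> all_nonadjacent H (K x) (K z)"
    if "x \<in> V" "z \<in> V" "x \<noteq> z" for x z
    using that nonempty all_black_imp_not_all_nonadjacent[of "K x" "K z" H]
    unfolding adjacent_def black_quotient_trigraph_iff red_quotient_trigraph_iff by auto
  show "verts ?C = verts ?Q'" using assms by auto
  show "black ?C = black ?Q'"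
  proof (rule doubleton_set_eq_pivotI[where w = u])
    fix y
    have "{u, y} \<in> black ?C \<longleftrightarrow>
        y \<in> V - {u, v} \<and> all_black H (K u) (K y) \<and> all_black H (K v) (K y)"
      unfolding black_contract_set_iff black_quotient_trigraph_iff using assms(1-3) by auto
    also have "\<dots> \<longleftrightarrow> {u, y} \<in> black ?Q'"
      unfolding black_quotient_trigraph_iff using assms(1-3) by (auto simp: all_black_def)
    finally show "{u, y} \<in> black ?C \<longleftrightarrow> {u, y} \<in> black ?Q'" .
  next
    fix p q assume "p \<noteq> u" "q \<noteq> u"
    then show "{p, q} \<in> black ?C \<longleftrightarrow> {p, q} \<in> black ?Q'"
      unfolding black_contract_set_iff black_quotient_trigraph_iff by auto
  qed (fact edges_quotient_trigraph_doubletons edges_contract_set_doubletons[OF edges_quotient_trigraph_doubletons])+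
  show "red ?C = red ?Q'"
  proof (rule doubleton_set_eq_pivotI[where w = u])
    fix y
    have "{u, y} \<in> red ?C \<longleftrightarrow> y \<in> V - {u, v}
        \<and> \<not> (all_black H (K u) (K y) \<and> all_black H (K v) (K y))
        \<and> \<not> (all_nonadjacent H (K u) (K y) \<and> all_nonadjacent H (K v) (K y))"
      unfolding red_contract_set_iff black_quotient_trigraph_iff red_quotient_trigraph_iff
      using assms(1-3) nonadjacent by auto
    also have "\<dots> \<longleftrightarrow> {u, y} \<in> red ?Q'"
      unfolding red_quotient_trigraph_iff using assms(1-3)
      by (auto simp: all_black_def all_nonadjacent_def)
    finally show "{u, y} \<in> red ?C \<longleftrightarrow> {u, y} \<in> red ?Q'" .
  next
    fix p q assume "p \<noteq> u" "q \<noteq> u"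
    then show "{p, q} \<in> red ?C \<longleftrightarrow> {p, q} \<in> red ?Q'"
      unfolding red_contract_set_iff red_quotient_trigraph_iff by auto
  qed (fact edges_quotient_trigraph_doubletons edges_contract_set_doubletons[OF edges_quotient_trigraph_doubletons])+
qed

lemma quotient_trigraph_eq_contract_set:
  assumes "trigraph H" and "w \<in> S" and "S \<subseteq> verts H"
    and "K w = S" and "\<forall>x\<in>verts H - S. K x = {x}"
  shows "quotient_trigraph H (verts H - S \<union> {w}) K = contract_set H S w"
    (is "?Q = ?C")
proof (rule trigraph_eqI)
  have other: "y \<in> verts H - S \<union> {w} \<and> w \<noteq> y \<longleftrightarrow> y \<in> verts H - S" for y
    using assms(2) by blast
  have edge: "u \<in> verts H \<and> z \<in> verts H \<and> u \<noteq> z" if "adjacent H u z" for u z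
    using trigraph_edge_distinct[OF assms(1) that] by blast
  show "verts ?Q = verts ?C" by simp
  show "black ?Q = black ?C"
  proof (rule doubleton_set_eq_pivotI[where w = w])
    fix y
    have "{w, y} \<in> black ?Q \<longleftrightarrow> y \<in> verts H - S \<and> all_black H S {y}"
      unfolding black_quotient_trigraph_iff using other[of y] assms(2,4,5) by auto
    also have "\<dots> \<longleftrightarrow> {w, y} \<in> black ?C"
      unfolding black_contract_set_iff all_black_def using assms(2) by auto
    finally show "{w, y} \<in> black ?Q \<longleftrightarrow> {w, y} \<in> black ?C" .
  next
    fix p q assume "p \<noteq> w" "q \<noteq> w"
    then show "{p, q} \<in> black ?Q \<longleftrightarrow> {p, q} \<in> black ?C"
      unfolding black_quotient_trigraph_iff black_contract_set_iff
      using assms(5) edge[of p q] by (auto simp: all_black_def adjacent_def)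
  qed (fact edges_quotient_trigraph_doubletons
        edges_contract_set_doubletons[OF trigraph_edges_doubletons[OF assms(1)]])+
  show "red ?Q = red ?C"
  proof (rule doubleton_set_eq_pivotI[where w = w])
    fix y
    have "{w, y} \<in> red ?Q \<longleftrightarrow>
        y \<in> verts H - S \<and> \<not> all_black H S {y} \<and> \<not> all_nonadjacent H S {y}"
      unfolding red_quotient_trigraph_iff using other[of y] assms(2,4,5) by auto
    also have "\<dots> \<longleftrightarrow> {w, y} \<in> red ?C"
      unfolding red_contract_set_iff all_black_def all_nonadjacent_def using assms(2) by auto
    finally show "{w, y} \<in> red ?Q \<longleftrightarrow> {w, y} \<in> red ?C" .
  next
    fix p q assume "p \<noteq> w" "q \<noteq> w"
    then show "{p, q} \<in> red ?Q \<longleftrightarrow> {p, q} \<in> red ?C"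
      unfolding red_quotient_trigraph_iff red_contract_set_iff trigraph_red_iff[OF assms(1)]
      using assms(5) edge[of p q] by (auto simp: all_black_def all_nonadjacent_def)
  qed (fact edges_quotient_trigraph_doubletons
        edges_contract_set_doubletons[OF trigraph_edges_doubletons[OF assms(1)]])+
qed

lemma red_degree_quotient_singleton:
  assumes "trigraph H" and "finite N" and "V - N \<subseteq> verts H" and "\<forall>x\<in>V - N. K x = {x}"
    and "z \<in> V - N"
  shows "red_degree (quotient_trigraph H V K) z
           \<le> red_degree H z + card {w \<in> N. {z, w} \<in> red (quotient_trigraph H V K)}"
proof -
  let ?Q = "quotient_trigraph H V K"
  have "{y \<in> verts ?Q. {z, y} \<in> red ?Q} \<subseteq> {y \<in> verts H. {z, y} \<in> red H} \<union> {w \<in> N. {z, w} \<in> red ?Q}"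
    using assms(3-5) trigraph_red_iff[OF assms(1), of z]
    by (auto simp: red_quotient_trigraph_iff all_black_def all_nonadjacent_def)
  moreover have "finite ({y \<in> verts H. {z, y} \<in> red H} \<union> {w \<in> N. {z, w} \<in> red ?Q})"
    using assms(1,2) by (simp add: trigraph_def)
  ultimately have "red_degree ?Q z \<le> card ({y \<in> verts H. {z, y} \<in> red H} \<union> {w \<in> N. {z, w} \<in> red ?Q})"
    unfolding red_degree_def by (rule card_mono[rotated])
  also have "\<dots> \<le> red_degree H z + card {w \<in> N. {z, w} \<in> red ?Q}"
    unfolding red_degree_def by (rule card_Un_le)
  finally show ?thesis .
qed

lemma red_degree_quotient_bag:
  assumes "finite N" and "w \<in> N"
    and homogeneous: "\<forall>z\<in>V - insert s N. K z = {z} \<and> (all_black H (K w) {z} \<or> all_nonadjacent H (K w) {z})"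
  shows "red_degree (quotient_trigraph H V K) w
           \<le> card {y \<in> insert s N. {w, y} \<in> red (quotient_trigraph H V K)}"
  unfolding red_degree_def
proof (rule card_mono)
  let ?Q = "quotient_trigraph H V K"
  show "finite {y \<in> insert s N. {w, y} \<in> red ?Q}" using assms(1) by simp
  show "{y \<in> verts ?Q. {w, y} \<in> red ?Q} \<subseteq> {y \<in> insert s N. {w, y} \<in> red ?Q}"
  proof (intro subsetI CollectI conjI)
    fix y assume y: "y \<in> {y \<in> verts ?Q. {w, y} \<in> red ?Q}"
    then show "{w, y} \<in> red ?Q" by simp
    show "y \<in> insert s N"
    proof (rule ccontr)
      assume "y \<notin> insert s N"
      then have "all_black H (K w) (K y) \<or> all_nonadjacent H (K w) (K y)"
        using homogeneous y by auto
      then show False using y by (auto simp: red_quotient_trigraph_iff)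
    qed
  qed
qed

section \<open>The fence gadget by indices\<close>

definition fence_vertex :: "(nat \<Rightarrow> 'v) \<Rightarrow> (nat \<Rightarrow> 'v) \<Rightarrow> nat \<Rightarrow> 'v" where
  "fence_vertex a b i = (if i < 6 then a (i + 1) else b (i - 5))"

definition fence_black_arc :: "nat \<Rightarrow> nat \<Rightarrow> bool" where
  "fence_black_arc i j \<longleftrightarrow> i < 5 \<and> j = i + 1 \<or> i = 5 \<and> j = 0
     \<or> 6 \<le> i \<and> i < 11 \<and> j = i + 1 \<or> i = 11 \<and> j = 6 \<or> i = 6 \<and> j = 5"

definition fence_red_arc :: "nat \<Rightarrow> nat \<Rightarrow> bool" where
  "fence_red_arc i j \<longleftrightarrow> i < 6 \<and> j = i + 6 \<or> i < 5 \<and> j = i + 7"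

lemma setcompr_1_to_5: "{f i | i. 1 \<le> i \<and> i \<le> (5::nat)} = {f 1, f 2, f 3, f 4, f 5}"
  by (auto simp: le_Suc_eq numeral_eq_Suc)

lemma setcompr_1_to_6: "{f i | i. 1 \<le> i \<and> i \<le> (6::nat)} = {f 1, f 2, f 3, f 4, f 5, f 6}"
  by (auto simp: le_Suc_eq numeral_eq_Suc)

lemma fence_black_eq_image:
  "fence_black a b
     = (\<lambda>(i, j). {fence_vertex a b i, fence_vertex a b j}) ` {(i, j). fence_black_arc i j}"
proof -
  have "{(i, j). fence_black_arc i j} = {(0, 1), (1, 2), (2, 3), (3, 4), (4, 5), (5, 0),
      (6, 7), (7, 8), (8, 9), (9, 10), (10, 11), (11, 6), (6, 5)}"
    by (auto simp: fence_black_arc_def less_Suc_eq eval_nat_numeral)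
  then show ?thesis
    unfolding fence_black_def setcompr_1_to_5
    by (simp add: fence_vertex_def insert_commute eval_nat_numeral)
qed

lemma fence_red_eq_image:
  "fence_red a b
     = (\<lambda>(i, j). {fence_vertex a b i, fence_vertex a b j}) ` {(i, j). fence_red_arc i j}"
proof -
  have "{(i, j). fence_red_arc i j} = {(0, 6), (1, 7), (2, 8), (3, 9), (4, 10), (5, 11),
      (0, 7), (1, 8), (2, 9), (3, 10), (4, 11)}"
    by (auto simp: fence_red_arc_def less_Suc_eq eval_nat_numeral)
  then show ?thesis
    unfolding fence_red_def setcompr_1_to_5 setcompr_1_to_6
    by (simp add: fence_vertex_def insert_commute eval_nat_numeral)
qed

lemma fence_verts_eq_image: "fence_verts a b = fence_vertex a b ` {0..<12}"
proof -
  have split: "{0..<12} = {..<6} \<union> (\<lambda>i. i + 6) ` {..<6::nat}"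
    by (auto simp: lessThan_atLeast0)
  have low: "fence_vertex a b ` {..<6} = a ` Suc ` {..<6}"
    unfolding image_image by (rule image_cong) (simp_all add: fence_vertex_def)
  have high: "fence_vertex a b ` (\<lambda>i. i + 6) ` {..<6} = b ` Suc ` {..<6}"
    unfolding image_image by (rule image_cong) (simp_all add: fence_vertex_def)
  show ?thesis
    unfolding fence_verts_def split image_Un low high image_Suc_lessThan ..
qed

lemma inj_on_fence_vertex:
  assumes a: "inj_on a {1..6}" and b: "inj_on b {1..6}" and ab: "a ` {1..6} \<inter> b ` {1..6} = {}"
  shows "inj_on (fence_vertex a b) {0..<12}"
proof (rule inj_onI)
  fix i j assume "i \<in> {0..<12}" "j \<in> {0..<12}" and eq: "fence_vertex a b i = fence_vertex a b j"
  then have low: "k < 6 \<Longrightarrow> k + 1 \<in> {1..6}" and high: "\<not> k < 6 \<Longrightarrow> k - 5 \<in> {1..6}"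
    if "k \<in> {i, j}" for k
    using that by auto
  show "i = j"
  proof (cases "i < 6"; cases "j < 6")
    assume "i < 6" "j < 6"
    then have "a (i + 1) = a (j + 1)" using eq by (simp add: fence_vertex_def)
    then have "i + 1 = j + 1"
      by (rule inj_onD[OF a]) (use low \<open>i < 6\<close> \<open>j < 6\<close> in simp_all)
    then show ?thesis by simp
  next
    assume "i < 6" "\<not> j < 6"
    then have "a (i + 1) = b (j - 5)" using eq by (simp add: fence_vertex_def)
    moreover have "a (i + 1) \<in> a ` {1..6}" "b (j - 5) \<in> b ` {1..6}"
      using low[of i] high[of j] \<open>i < 6\<close> \<open>\<not> j < 6\<close> by (intro imageI; simp)+
    ultimately show ?thesis using ab by (metis IntI empty_iff)
  next
    assume "\<not> i < 6" "j < 6"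
    then have "b (i - 5) = a (j + 1)" using eq by (simp add: fence_vertex_def)
    moreover have "b (i - 5) \<in> b ` {1..6}" "a (j + 1) \<in> a ` {1..6}"
      using high[of i] low[of j] \<open>\<not> i < 6\<close> \<open>j < 6\<close> by (intro imageI; simp)+
    ultimately show ?thesis using ab by (metis IntI empty_iff)
  next
    assume "\<not> i < 6" "\<not> j < 6"
    then have "b (i - 5) = b (j - 5)" using eq by (simp add: fence_vertex_def)
    then have "i - 5 = j - 5"
      by (rule inj_onD[OF b]) (use high \<open>\<not> i < 6\<close> \<open>\<not> j < 6\<close> in simp_all)
    then show ?thesis using \<open>\<not> i < 6\<close> \<open>\<not> j < 6\<close> by simp
  qed
qed

lemma doubleton_mem_image_iff:
  assumes "inj_on f D" and "i \<in> D" and "j \<in> D" and "\<forall>(k, l)\<in>P. k \<in> D \<and> l \<in> D"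
  shows "{f i, f j} \<in> (\<lambda>(k, l). {f k, f l}) ` P \<longleftrightarrow> (i, j) \<in> P \<or> (j, i) \<in> P"
proof
  assume "{f i, f j} \<in> (\<lambda>(k, l). {f k, f l}) ` P"
  then obtain k l where "(k, l) \<in> P" and "{f i, f j} = {f k, f l}" by auto
  moreover have "k \<in> D" "l \<in> D" using \<open>(k, l) \<in> P\<close> assms(4) by auto
  ultimately show "(i, j) \<in> P \<or> (j, i) \<in> P"
    using assms(1-3) by (auto simp: doubleton_eq_iff dest: inj_onD)
next
  assume "(i, j) \<in> P \<or> (j, i) \<in> P"
  then show "{f i, f j} \<in> (\<lambda>(k, l). {f k, f l}) ` P"
    by (auto simp: image_iff insert_commute)
qed

definition fence_black_index :: "nat \<Rightarrow> nat \<Rightarrow> bool" where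
  "fence_black_index i j \<longleftrightarrow> fence_black_arc i j \<or> fence_black_arc j i"

definition fence_red_index :: "nat \<Rightarrow> nat \<Rightarrow> bool" where
  "fence_red_index i j \<longleftrightarrow> fence_red_arc i j \<or> fence_red_arc j i"

definition red_bags :: "nat list \<Rightarrow> nat list \<Rightarrow> bool" where
  "red_bags c d \<longleftrightarrow> \<not> (\<forall>i\<in>set c. \<forall>j\<in>set d. fence_black_index i j)
     \<and> \<not> (\<forall>i\<in>set c. \<forall>j\<in>set d. \<not> fence_black_index i j \<and> \<not> fence_red_index i j)"

definition mixed_bag :: "nat list \<Rightarrow> bool" where
  "mixed_bag c \<longleftrightarrow> (\<exists>i\<in>set c. i < 6) \<and> (\<exists>i\<in>set c. 6 \<le> i)"

text \<open>A state lists the surviving fence vertices by index, together with the bag of indices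
  merged into each of them.\<close>

type_synonym bag_state = "nat list \<times> (nat \<Rightarrow> nat list)"

text \<open>The red neighbours of bag i are other bags and, if the bag is mixed, the vertex s;
  s itself may gain one red edge, to the only mixed bag.\<close>

fun bag_state_ok :: "bag_state \<Rightarrow> bool" where
  "bag_state_ok (reps, bag) \<longleftrightarrow>
     (\<forall>i\<in>set reps. i < 12 \<and> bag i \<noteq> [] \<and> (\<forall>k\<in>set (bag i). k < 12))
     \<and> length (filter (\<lambda>i. mixed_bag (bag i)) reps) \<le> 1
     \<and> (\<forall>i\<in>set reps. length (filter (\<lambda>j. j \<noteq> i \<and> red_bags (bag i) (bag j)) reps)
                      + (if mixed_bag (bag i) then 1 else 0) \<le> 4)"

fun merge_bags :: "bag_state \<Rightarrow> nat \<times> nat \<Rightarrow> bag_state" where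
  "merge_bags (reps, bag) (i, j) = (removeAll j reps, bag(i := bag i @ bag j))"

fun valid_merge :: "bag_state \<Rightarrow> nat \<times> nat \<Rightarrow> bool" where
  "valid_merge (reps, bag) (i, j) \<longleftrightarrow> i \<in> set reps \<and> j \<in> set reps \<and> i \<noteq> j"

fun merge_states :: "bag_state \<Rightarrow> (nat \<times> nat) list \<Rightarrow> bag_state list" where
  "merge_states st [] = [st]"
| "merge_states st (m # ms) = st # merge_states (merge_bags st m) ms"

fun valid_merges :: "bag_state \<Rightarrow> (nat \<times> nat) list \<Rightarrow> bool" where
  "valid_merges st [] \<longleftrightarrow> True"
| "valid_merges st (m # ms) \<longleftrightarrow> valid_merge st m \<and> valid_merges (merge_bags st m) ms"

lemma hd_merge_states [simp]: "hd (merge_states st ms) = st"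
  by (cases ms) simp_all

lemma merge_states_not_Nil [simp]: "merge_states st ms \<noteq> []"
  by (cases ms) simp_all

definition singleton_bags :: bag_state where
  "singleton_bags = ([0..<12], \<lambda>i. [i])"

text \<open>In the names of the paper: a1 b1, b2 b3, a2 a3, b2 b4, a2 a4, b2 b5, a1 a5, a2 a6, b2 b6,
  a1 a2, a1 b2.\<close>

definition fence_merges :: "(nat \<times> nat) list" where
  "fence_merges = [(0, 6), (7, 8), (1, 2), (7, 9), (1, 3), (7, 10), (0, 4), (1, 5), (7, 11), (0, 1), (0, 7)]"

lemma valid_fence_merges: "valid_merges singleton_bags fence_merges"
  by code_simp

lemma fence_merge_states_ok: "\<forall>st\<in>set (merge_states singleton_bags fence_merges). bag_state_ok st"
  by code_simp

lemma last_fence_merge_state: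
  "fst (last (merge_states singleton_bags fence_merges)) = [0]
   \<and> set (snd (last (merge_states singleton_bags fence_merges)) 0) = {0..<12}"
  by code_simp

lemma card_image_filter_le: "card (f ` {x \<in> set xs. P x}) \<le> length (filter P xs)"
proof -
  have "card (f ` {x \<in> set xs. P x}) \<le> card (set (filter P xs))"
    by (metis card_image_le finite_set set_filter)
  also have "\<dots> \<le> length (filter P xs)" by (rule card_length)
  finally show ?thesis .
qed

section \<open>Contracting an attached fence\<close>

locale attached_fence =
  fixes H :: "'v trigraph" and a b :: "nat \<Rightarrow> 'v" and s :: 'v
  assumes trigraph: "trigraph H"
    and fence: "contains_fence H a b"
    and attached: "attached H a b {s}"
    and attachment: "attachment_rule H a b {s}"
begin

abbreviation fv :: "nat \<Rightarrow> 'v" where "fv \<equiv> fence_vertex a b"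

abbreviation F :: "'v set" where "F \<equiv> fence_verts a b"

lemma inj_fv: "inj_on fv {0..<12}"
  using fence inj_on_fence_vertex unfolding contains_fence_def by blast

lemma F_eq_image: "F = fv ` {0..<12}"
  by (rule fence_verts_eq_image)

lemma F_subset: "F \<subseteq> verts H"
  using fence unfolding contains_fence_def by blast

lemma s_outside: "s \<in> verts H - F"
  using attached unfolding attached_def by blast

lemma fv_in_F: "i < 12 \<Longrightarrow> fv i \<in> F"
  by (simp add: F_eq_image)

lemma fv_eq_iff: "i < 12 \<Longrightarrow> j < 12 \<Longrightarrow> fv i = fv j \<longleftrightarrow> i = j"
  using inj_fv by (auto dest: inj_onD)

lemma black_fv_iff:
  assumes "i < 12" "j < 12"
  shows "{fv i, fv j} \<in> black H \<longleftrightarrow> fence_black_index i j"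
proof (cases "i = j")
  case True
  then show ?thesis
    using trigraph_edge_distinct[OF trigraph, of "fv i" "fv j"]
    by (auto simp: adjacent_def fence_black_index_def fence_black_arc_def)
next
  case False
  then have "{fv i, fv j} \<in> black H \<longleftrightarrow> {fv i, fv j} \<in> fence_black a b"
    using fence fv_in_F assms fv_eq_iff unfolding contains_fence_def by blast
  also have "\<dots> \<longleftrightarrow> fence_black_index i j"
    unfolding fence_black_eq_image fence_black_index_def
    by (subst doubleton_mem_image_iff[OF inj_fv]) (use assms in \<open>auto simp: fence_black_arc_def\<close>)
  finally show ?thesis .
qed

lemma red_fv_iff:
  assumes "i < 12" "j < 12"
  shows "{fv i, fv j} \<in> red H \<longleftrightarrow> fence_red_index i j"
proof (cases "i = j")
  case True
  then show ?thesis
    using trigraph_edge_distinct[OF trigraph, of "fv i" "fv j"]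
    by (auto simp: adjacent_def fence_red_index_def fence_red_arc_def)
next
  case False
  then have "{fv i, fv j} \<in> red H \<longleftrightarrow> {fv i, fv j} \<in> fence_red a b"
    using fence fv_in_F assms fv_eq_iff unfolding contains_fence_def by blast
  also have "\<dots> \<longleftrightarrow> fence_red_index i j"
    unfolding fence_red_eq_image fence_red_index_def
    by (subst doubleton_mem_image_iff[OF inj_fv]) (use assms in \<open>auto simp: fence_red_arc_def\<close>)
  finally show ?thesis .
qed

lemma fence_outside_edges:
  "\<exists>X. s \<notin> X \<and> (\<forall>i<12. \<forall>z\<in>verts H - F.
      {fv i, z} \<notin> red H \<and> ({fv i, z} \<in> black H \<longleftrightarrow> z \<in> X \<or> z = s \<and> i < 6))"
proof -
  obtain X where X: "X \<subseteq> verts H - (F \<union> {s})"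
    and A: "\<forall>i \<in> {1..6}. \<forall>z \<in> verts H - F. (adjacent H (a i) z \<longleftrightarrow> z \<in> X \<union> {s}) \<and> {a i, z} \<notin> red H"
    and B: "\<forall>i \<in> {1..6}. \<forall>z \<in> verts H - F. (adjacent H (b i) z \<longleftrightarrow> z \<in> X) \<and> {b i, z} \<notin> red H"
    using attachment unfolding attachment_rule_def by blast
  have "{fv i, z} \<notin> red H \<and> ({fv i, z} \<in> black H \<longleftrightarrow> z \<in> X \<or> z = s \<and> i < 6)"
    if "i < 12" "z \<in> verts H - F" for i z
  proof (cases "i < 6")
    case True
    then show ?thesis using A that by (auto simp: fence_vertex_def adjacent_def)
  next
    case False
    then have "i - 5 \<in> {1..6}" using that(1) by auto
    then show ?thesis using B X that False by (auto simp: fence_vertex_def adjacent_def)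
  qed
  moreover have "s \<notin> X" using X by blast
  ultimately show ?thesis by blast
qed

lemma not_red_fv_outside: "i < 12 \<Longrightarrow> z \<in> verts H - F \<Longrightarrow> {fv i, z} \<notin> red H"
  using fence_outside_edges by blast

lemma black_fv_s_iff: "i < 12 \<Longrightarrow> {fv i, s} \<in> black H \<longleftrightarrow> i < 6"
  using fence_outside_edges s_outside by blast

lemma black_fv_outside_homogeneous:
  assumes "i < 12" "j < 12" "z \<in> verts H - F" "z \<noteq> s"
  shows "{fv i, z} \<in> black H \<longleftrightarrow> {fv j, z} \<in> black H"
proof -
  obtain X where "\<forall>i<12. \<forall>z\<in>verts H - F.
      {fv i, z} \<notin> red H \<and> ({fv i, z} \<in> black H \<longleftrightarrow> z \<in> X \<or> z = s \<and> i < 6)"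
    using fence_outside_edges by blast
  then show ?thesis using assms by simp
qed

lemma outside_homogeneous:
  assumes "z \<in> verts H - F" "z \<noteq> s" "A \<subseteq> F"
  shows "all_black H A {z} \<or> all_nonadjacent H A {z}"
proof (cases "{fv 0, z} \<in> black H")
  case True
  then have "\<forall>i<12. {fv i, z} \<in> black H"
    using black_fv_outside_homogeneous[of _ 0 z] assms(1,2) by simp
  then show ?thesis using assms(3) unfolding all_black_def F_eq_image by auto
next
  case False
  then have "\<forall>i<12. {fv i, z} \<notin> black H \<and> {fv i, z} \<notin> red H"
    using black_fv_outside_homogeneous[of _ 0 z] not_red_fv_outside assms(1,2) by simp
  then show ?thesis using assms(3) unfolding all_nonadjacent_def adjacent_def F_eq_image by auto
qed

lemma all_black_fv_s_iff:
  "\<forall>i\<in>I. i < 12 \<Longrightarrow> all_black H (fv ` I) {s} \<longleftrightarrow> (\<forall>i\<in>I. i < 6)"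
  unfolding all_black_def using black_fv_s_iff by auto

lemma all_nonadjacent_fv_s_iff:
  "\<forall>i\<in>I. i < 12 \<Longrightarrow> all_nonadjacent H (fv ` I) {s} \<longleftrightarrow> (\<forall>i\<in>I. 6 \<le> i)"
  unfolding all_nonadjacent_def adjacent_def using black_fv_s_iff not_red_fv_outside s_outside
  by (auto simp: not_less)

lemma all_black_fv_iff:
  "\<forall>i\<in>I \<union> J. i < 12 \<Longrightarrow>
    all_black H (fv ` I) (fv ` J) \<longleftrightarrow> (\<forall>i\<in>I. \<forall>j\<in>J. fence_black_index i j)"
  unfolding all_black_def using black_fv_iff by auto

lemma all_nonadjacent_fv_iff:
  "\<forall>i\<in>I \<union> J. i < 12 \<Longrightarrow> all_nonadjacent H (fv ` I) (fv ` J)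
     \<longleftrightarrow> (\<forall>i\<in>I. \<forall>j\<in>J. \<not> fence_black_index i j \<and> \<not> fence_red_index i j)"
  unfolding all_nonadjacent_def adjacent_def using black_fv_iff red_fv_iff by auto

definition bag_vertices :: "(nat \<Rightarrow> nat list) \<Rightarrow> 'v \<Rightarrow> 'v set" where
  "bag_vertices bag v = (if v \<in> F then fv ` set (bag (the_inv_into {0..<12} fv v)) else {v})"

definition state_trigraph :: "bag_state \<Rightarrow> 'v trigraph" where
  "state_trigraph st = quotient_trigraph H (verts H - F \<union> fv ` set (fst st)) (bag_vertices (snd st))"

lemma bag_vertices_fv [simp]: "i < 12 \<Longrightarrow> bag_vertices bag (fv i) = fv ` set (bag i)"
  unfolding bag_vertices_def using inj_fv fv_in_F by (simp add: the_inv_into_f_f)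

lemma bag_vertices_outside [simp]: "v \<notin> F \<Longrightarrow> bag_vertices bag v = {v}"
  by (simp add: bag_vertices_def)

lemma state_trigraph_singleton_bags: "state_trigraph singleton_bags = H"
proof -
  have "verts H - F \<union> fv ` {0..<12} = verts H" using F_subset F_eq_image by auto
  moreover have "bag_vertices (\<lambda>i. [i]) x = {x}" for x
  proof (cases "x \<in> F")
    case True
    then obtain k where "k < 12" "x = fv k" using F_eq_image by auto
    then show ?thesis by simp
  qed simp
  ultimately show ?thesis
    unfolding state_trigraph_def singleton_bags_def
    using quotient_trigraph_singletons[OF trigraph] by simp
qed

lemma state_trigraph_last:
  assumes "fst st = [0]" and "set (snd st 0) = {0..<12}"
  shows "state_trigraph st = contract_set H F (a 1)"
proof -
  have "state_trigraph st = quotient_trigraph H (verts H - F \<union> {fv 0}) (bag_vertices (snd st))"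
    using assms(1) by (simp add: state_trigraph_def)
  also have "\<dots> = contract_set H F (fv 0)"
    by (rule quotient_trigraph_eq_contract_set[OF trigraph])
      (use assms(2) F_eq_image F_subset in auto)
  also have "fv 0 = a 1" by (simp add: fence_vertex_def)
  finally show ?thesis .
qed

lemma contraction_step_merge_bags:
  assumes ok: "bag_state_ok st" and valid: "valid_merge st m"
  shows "contraction_step (state_trigraph st) (state_trigraph (merge_bags st m))"
proof -
  obtain reps bag i j where st: "st = (reps, bag)" and m: "m = (i, j)" by (cases st, cases m)
  have reps: "\<forall>k\<in>set reps. k < 12 \<and> bag k \<noteq> []" using ok st by simp
  have ij: "i \<in> set reps" "j \<in> set reps" "i \<noteq> j" using valid st m by simp_all
  then have "fv i \<noteq> fv j" using reps fv_eq_iff by simp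
  let ?V = "verts H - F \<union> fv ` set reps"
  have "?V - {fv j} = verts H - F \<union> fv ` set (removeAll j reps)"
    using reps ij fv_in_F by (auto simp: fv_eq_iff)
  moreover have "(bag_vertices bag)(fv i := bag_vertices bag (fv i) \<union> bag_vertices bag (fv j))
      = bag_vertices (bag(i := bag i @ bag j))"
  proof
    fix v
    show "((bag_vertices bag)(fv i := bag_vertices bag (fv i) \<union> bag_vertices bag (fv j))) v
        = bag_vertices (bag(i := bag i @ bag j)) v"
      using reps ij F_eq_image by (cases "v \<in> F") (auto simp: fv_eq_iff image_Un)
  qed
  moreover have "\<forall>x\<in>?V. bag_vertices bag x \<noteq> {}"
    using reps by (auto simp: fv_in_F)
  ultimately have "contract_set (state_trigraph st) {fv i, fv j} (fv i)
      = state_trigraph (merge_bags st m)"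
    using contract_quotient_trigraph[of "fv i" ?V "fv j" "bag_vertices bag" H] ij \<open>fv i \<noteq> fv j\<close>
    by (simp add: state_trigraph_def st m)
  then show ?thesis
    unfolding contraction_step_def
    by (intro exI[of _ "fv i"] exI[of _ "fv j"] exI[of _ "fv i"] conjI)
      (use ij \<open>fv i \<noteq> fv j\<close> in \<open>auto simp: state_trigraph_def st\<close>)
qed

lemma red_state_trigraph_bags_iff:
  assumes "bag_state_ok (reps, bag)" "i \<in> set reps" "j \<in> set reps" "i \<noteq> j"
  shows "{fv i, fv j} \<in> red (state_trigraph (reps, bag)) \<longleftrightarrow> red_bags (bag i) (bag j)"
proof -
  have "\<forall>k\<in>set (bag i) \<union> set (bag j). k < 12" "i < 12" "j < 12" using assms(1-3) by auto
  then show ?thesis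
    unfolding state_trigraph_def red_quotient_trigraph_iff red_bags_def
    using assms(2-4) by (simp add: all_black_fv_iff all_nonadjacent_fv_iff fv_eq_iff)
qed

lemma red_state_trigraph_s_iff:
  assumes "bag_state_ok (reps, bag)" "i \<in> set reps"
  shows "{fv i, s} \<in> red (state_trigraph (reps, bag)) \<longleftrightarrow> mixed_bag (bag i)"
proof -
  have "\<forall>k\<in>set (bag i). k < 12" "i < 12" using assms by auto
  moreover have "mixed_bag c \<longleftrightarrow> \<not> (\<forall>k\<in>set c. k < 6) \<and> \<not> (\<forall>k\<in>set c. 6 \<le> k)" for c
    unfolding mixed_bag_def by (meson not_less)
  ultimately show ?thesis
    unfolding state_trigraph_def red_quotient_trigraph_iff
    using assms(2) s_outside fv_in_F
    by (auto simp: all_black_fv_s_iff all_nonadjacent_fv_s_iff)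
qed

lemma red_degree_state_trigraph_bag:
  assumes ok: "bag_state_ok (reps, bag)" and i: "i \<in> set reps"
  shows "red_degree (state_trigraph (reps, bag)) (fv i) \<le> 4"
proof -
  let ?Q = "state_trigraph (reps, bag)"
  let ?N = "fv ` set reps"
  let ?reds = "{j \<in> set reps. j \<noteq> i \<and> red_bags (bag i) (bag j)}"
  have reps: "\<forall>k\<in>set reps. k < 12 \<and> (\<forall>l\<in>set (bag k). l < 12)" using ok by simp
  have "bag_vertices bag (fv i) \<subseteq> F" using reps i fv_in_F by auto
  then have "\<forall>z\<in>(verts H - F \<union> ?N) - insert s ?N. bag_vertices bag z = {z}
      \<and> (all_black H (bag_vertices bag (fv i)) {z} \<or> all_nonadjacent H (bag_vertices bag (fv i)) {z})"
    using outside_homogeneous by auto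
  then have "red_degree ?Q (fv i) \<le> card {y \<in> insert s ?N. {fv i, y} \<in> red ?Q}"
    unfolding state_trigraph_def using i by (intro red_degree_quotient_bag) auto
  also have "\<dots> \<le> card ((if mixed_bag (bag i) then {s} else {}) \<union> fv ` ?reds)"
  proof (rule card_mono)
    have no_loop: "{fv i} \<notin> red ?Q"
      using red_quotient_trigraph_iff[of "fv i" "fv i"] unfolding state_trigraph_def by simp
    show "{y \<in> insert s ?N. {fv i, y} \<in> red ?Q} \<subseteq> (if mixed_bag (bag i) then {s} else {}) \<union> fv ` ?reds"
    proof
      fix y assume "y \<in> {y \<in> insert s ?N. {fv i, y} \<in> red ?Q}"
      then consider "y = s" "{fv i, s} \<in> red ?Q"
        | j where "j \<in> set reps" "y = fv j" "{fv i, fv j} \<in> red ?Q" by auto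
      then show "y \<in> (if mixed_bag (bag i) then {s} else {}) \<union> fv ` ?reds"
      proof cases
        case 1
        then show ?thesis using red_state_trigraph_s_iff[OF ok i] by simp
      next
        case (2 j)
        then have "j \<noteq> i" using no_loop by auto
        then show ?thesis using 2 red_state_trigraph_bags_iff[OF ok i \<open>j \<in> set reps\<close>] by auto
      qed
    qed
  qed simp
  also have "\<dots> \<le> length (filter (\<lambda>j. j \<noteq> i \<and> red_bags (bag i) (bag j)) reps)
      + (if mixed_bag (bag i) then 1 else 0)"
    using card_Un_le[of "if mixed_bag (bag i) then {s} else {}" "fv ` ?reds"]
      card_image_filter_le[of fv reps "\<lambda>j. j \<noteq> i \<and> red_bags (bag i) (bag j)"]
    by (simp split: if_split_asm)
  also have "\<dots> \<le> 4" using ok i by (simp only: bag_state_ok.simps)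
  finally show ?thesis .
qed

lemma red_degree_state_trigraph_outside:
  assumes H_deg: "max_red_deg_le H 4" and s_deg: "red_degree H s \<le> 3"
    and ok: "bag_state_ok (reps, bag)" and v: "v \<in> verts H - F"
  shows "red_degree (state_trigraph (reps, bag)) v \<le> 4"
proof -
  let ?Q = "state_trigraph (reps, bag)"
  let ?N = "fv ` set reps"
  have reps: "\<forall>k\<in>set reps. k < 12 \<and> (\<forall>l\<in>set (bag k). l < 12)" using ok by simp
  have N_F: "?N \<subseteq> F" using reps fv_in_F by auto
  have "red_degree ?Q v \<le> red_degree H v + card {w \<in> ?N. {v, w} \<in> red ?Q}"
    unfolding state_trigraph_def
    by (rule red_degree_quotient_singleton[OF trigraph]) (use v N_F in auto)
  also have "\<dots> \<le> 4"
  proof (cases "v = s")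
    case True
    have "{w \<in> ?N. {s, w} \<in> red ?Q} \<subseteq> fv ` {j \<in> set reps. mixed_bag (bag j)}"
      using red_state_trigraph_s_iff[OF ok] by (auto simp: insert_commute)
    then have "card {w \<in> ?N. {s, w} \<in> red ?Q} \<le> card (fv ` {j \<in> set reps. mixed_bag (bag j)})"
      by (rule card_mono[rotated]) simp
    also have "\<dots> \<le> length (filter (\<lambda>j. mixed_bag (bag j)) reps)"
      by (rule card_image_filter_le)
    also have "\<dots> \<le> 1" using ok by simp
    finally show ?thesis using True s_deg by simp
  next
    case False
    have none: "{w \<in> ?N. {v, w} \<in> red ?Q} = {}"
    proof -
      have "bag_vertices bag (fv j) \<subseteq> F" if "j \<in> set reps" for j
        using reps that fv_in_F by auto
      then have "all_black H (bag_vertices bag (fv j)) {v} \<or> all_nonadjacent H (bag_vertices bag (fv j)) {v}"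
        if "j \<in> set reps" for j
        using outside_homogeneous[OF v False] that by blast
      then show ?thesis
        unfolding state_trigraph_def red_quotient_trigraph_iff
        using v by (auto simp: all_black_commute all_nonadjacent_commute)
    qed
    show ?thesis using H_deg v unfolding none max_red_deg_le_def by simp
  qed
  finally show ?thesis .
qed

lemma max_red_deg_state_trigraph:
  assumes "max_red_deg_le H 4" and "red_degree H s \<le> 3" and "bag_state_ok st"
  shows "max_red_deg_le (state_trigraph st) 4"
proof -
  obtain reps bag where st: "st = (reps, bag)" by (cases st)
  show ?thesis
    unfolding max_red_deg_le_def
  proof
    fix v assume "v \<in> verts (state_trigraph st)"
    then consider "v \<in> verts H - F" | i where "i \<in> set reps" "v = fv i"
      by (auto simp: state_trigraph_def st)
    then show "red_degree (state_trigraph st) v \<le> 4"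
      using red_degree_state_trigraph_outside[OF assms(1,2)] red_degree_state_trigraph_bag assms(3)
      by cases (simp_all add: st)
  qed
qed

lemma partial_seq_merge_states:
  assumes "max_red_deg_le H 4" and "red_degree H s \<le> 3"
    and "valid_merges st ms" and "\<forall>st'\<in>set (merge_states st ms). bag_state_ok st'"
  shows "partial_seq 4 (map state_trigraph (merge_states st ms))"
  using assms(3,4)
proof (induction ms arbitrary: st)
  case Nil
  then show ?case
    using max_red_deg_state_trigraph[OF assms(1,2)] by (simp add: partial_seq_singleton)
next
  case (Cons m ms)
  then show ?case
    using max_red_deg_state_trigraph[OF assms(1,2)] contraction_step_merge_bags
    by (simp add: partial_seq_Cons hd_map)
qed

lemma fence_contraction_sequence:
  assumes "max_red_deg_le H 4" and "red_degree H s \<le> 3"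
  shows "\<exists>Gs. partial_seq 4 Gs \<and> hd Gs = H \<and> last Gs = contract_set H F (a 1)"
proof (intro exI conjI)
  let ?sts = "merge_states singleton_bags fence_merges"
  show "partial_seq 4 (map state_trigraph ?sts)"
    using partial_seq_merge_states[OF assms valid_fence_merges fence_merge_states_ok] .
  show "hd (map state_trigraph ?sts) = H"
    by (simp add: hd_map state_trigraph_singleton_bags)
  show "last (map state_trigraph ?sts) = contract_set H F (a 1)"
    using last_fence_merge_state by (simp add: last_map state_trigraph_last)
qed

end

theorem lemma4p10:
  fixes H :: "'v trigraph" and a b :: "nat \<Rightarrow> 'v" and s :: 'v
  assumes "trigraph H"
    and "max_red_deg_le H 4"
    and "contains_fence H a b"
    and "attached H a b {s}"
    and "red_degree H s \<le> 3"
    and "attachment_rule H a b {s}"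
  shows "\<exists>Gs. partial_seq 4 Gs \<and> hd Gs = H
           \<and> trigraph_iso (last Gs) (contract_set H (fence_verts a b) (a 1))"
proof -
  interpret attached_fence H a b s
    using assms by unfold_locales
  show ?thesis
    using fence_contraction_sequence[OF assms(2,5)] trigraph_iso_refl by metis
qed

end
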